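(* An algebra $(S,\sqcup,\cap)$ with two binary operations is an ado-semilattice if and only if: (1) $(S,\sqcup)$ is a left regular band; (2) $\cap$ is the semilattice meet with respect to the partial order $\leq$ given by $a\leq b$ iff $a\sqcup b=b$; (3) $a\sqcup(b\cap c)=(a\sqcup b)\cap(a\sqcup c)$ for all $a,b,c$; (4) $a\cap c\leq(a\cap b)\sqcup c$ for all $a,b,c$.
   Context: An o-semilattice is an algebra $(L,\cap,\sqcup)$ such that $(L,\cap)$ is a semilattice and, with $x\leq y$ iff $x=x\cap y$, for all $x,y,z$: (i) $x\leq x\sqcup y$; (ii) $(x\cap y)\sqcup(y\cap z)\leq y$; (iii) $x\sqcup y\leq x\sqcup(y\cap(x\sqcup y))$; (iv) $x\cap z\leq(x\cap y)\sqcup z$. It is distributive if $(a\cap d)\sqcup((b\cap d)\cap(c\cap d))=((a\cap d)\sqcup(b\cap d))\cap((a\cap d)\sqcup(c\cap d))$ for all $a,b,c,d$. An ado-semilattice is a distributive o-semilattice in which $\sqcup$ is associative. A left regular band is a set with a binary operation $\sqcup$ satisfying $a\sqcup(b\sqcup c)=(a\sqcup b)\sqcup c$, $a\sqcup a=a$, $a\sqcup b=(a\sqcup b)\sqcup a$; in a left regular band, $a\leq b$ iff $a\sqcup b=b$ defines a partial order. *)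

theory Defs
  imports Main
begin

definition is_semilattice :: "('a \<Rightarrow> 'a \<Rightarrow> 'a) \<Rightarrow> bool" where
  "is_semilattice m \<longleftrightarrow>
     (\<forall>x y z. m x (m y z) = m (m x y) z) \<and> (\<forall>x y. m x y = m y x) \<and> (\<forall>x. m x x = x)"

definition meet_le :: "('a \<Rightarrow> 'a \<Rightarrow> 'a) \<Rightarrow> 'a \<Rightarrow> 'a \<Rightarrow> bool" where
  "meet_le m x y \<longleftrightarrow> x = m x y"

definition o_semilattice :: "('a \<Rightarrow> 'a \<Rightarrow> 'a) \<Rightarrow> ('a \<Rightarrow> 'a \<Rightarrow> 'a) \<Rightarrow> bool" where
  "o_semilattice m j \<longleftrightarrow> is_semilattice m \<and>
     (\<forall>x y. meet_le m x (j x y)) \<and>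
     (\<forall>x y z. meet_le m (j (m x y) (m y z)) y) \<and>
     (\<forall>x y. meet_le m (j x y) (j x (m y (j x y)))) \<and>
     (\<forall>x y z. meet_le m (m x z) (j (m x y) z))"

definition o_distributive :: "('a \<Rightarrow> 'a \<Rightarrow> 'a) \<Rightarrow> ('a \<Rightarrow> 'a \<Rightarrow> 'a) \<Rightarrow> bool" where
  "o_distributive m j \<longleftrightarrow> (\<forall>a b c d.
     j (m a d) (m (m b d) (m c d)) = m (j (m a d) (m b d)) (j (m a d) (m c d)))"

definition ado_semilattice :: "('a \<Rightarrow> 'a \<Rightarrow> 'a) \<Rightarrow> ('a \<Rightarrow> 'a \<Rightarrow> 'a) \<Rightarrow> bool" where
  "ado_semilattice m j \<longleftrightarrow> o_semilattice m j \<and> o_distributive m j \<and>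
     (\<forall>x y z. j x (j y z) = j (j x y) z)"

definition left_regular_band :: "('a \<Rightarrow> 'a \<Rightarrow> 'a) \<Rightarrow> bool" where
  "left_regular_band j \<longleftrightarrow> (\<forall>a b c. j a (j b c) = j (j a b) c) \<and> (\<forall>a. j a a = a) \<and>
     (\<forall>a b. j a b = j (j a b) a)"

definition band_le :: "('a \<Rightarrow> 'a \<Rightarrow> 'a) \<Rightarrow> 'a \<Rightarrow> 'a \<Rightarrow> bool" where
  "band_le j a b \<longleftrightarrow> j a b = b"

definition is_meet_wrt :: "('a \<Rightarrow> 'a \<Rightarrow> bool) \<Rightarrow> ('a \<Rightarrow> 'a \<Rightarrow> 'a) \<Rightarrow> bool" where
  "is_meet_wrt le m \<longleftrightarrow> (\<forall>a b. le (m a b) a \<and> le (m a b) b \<and>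
     (\<forall>c. le c a \<and> le c b \<longrightarrow> le c (m a b)))"

end

theory Submission
  imports Defs
begin

text \<open>
  In an ado-semilattice the band order coincides with the meet order: axioms (i), (ii) and (iv)
  give \<open>a \<le> b \<longleftrightarrow> a \<squnion> b = b\<close>, and then (i), (ii) and associativity make \<open>\<squnion>\<close> a left
  regular band. The crux is left distributivity. Restricting the o-distributive law below
  \<open>d = a \<squnion> b\<close> and using (iii) shows \<open>a \<squnion> (b \<inter> z) = z\<close> whenever \<open>a \<le> z \<le> a \<squnion> b\<close>.
  For \<open>e = (a \<squnion> b) \<inter> (a \<squnion> c)\<close> this gives \<open>a \<squnion> (b \<inter> e) = e = a \<squnion> (c \<inter> e)\<close>, so
  o-distributivity below \<open>e\<close> yields \<open>e = a \<squnion> (b \<inter> c \<inter> e) \<le> a \<squnion> (b \<inter> c)\<close>.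
  Conversely, a meet with respect to a partial order is a semilattice inducing that order, and
  (iii) follows from left distributivity because \<open>a \<squnion> (a \<squnion> b) = a \<squnion> b\<close>.
\<close>

lemma is_semilattice_iff_semilattice: "is_semilattice m \<longleftrightarrow> semilattice m"
  by (auto simp: is_semilattice_def semilattice_def semilattice_axioms_def
      abel_semigroup_def abel_semigroup_axioms_def semigroup_def)

lemma semilattice_order_meet_le:
  assumes "is_semilattice m"
  shows "semilattice_order m (meet_le m) (\<lambda>x y. meet_le m x y \<and> x \<noteq> y)"
  using assms by (simp add: semilattice_order_def semilattice_order_axioms_def
      is_semilattice_iff_semilattice meet_le_def)

lemma left_regular_band_ordering:
  assumes "left_regular_band j"
  shows "ordering (band_le j) (\<lambda>a b. band_le j a b \<and> a \<noteq> b)"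
proof
  fix a b c
  from assms have assoc: "j a (j b c) = j (j a b) c" and idem: "j a a = a"
    and left_regular: "j a b = j (j a b) a"
    unfolding left_regular_band_def by blast+
  show "band_le j a a"
    by (simp add: band_le_def idem)
  show "band_le j a c" if "band_le j a b" and "band_le j b c"
    using that assoc by (metis band_le_def)
  show "a = b" if "band_le j a b" and "band_le j b a"
    using that left_regular by (metis band_le_def)
qed simp

lemma (in ordering) semilattice_order_if_is_meet_wrt:
  assumes "is_meet_wrt (\<^bold>\<le>) m"
  shows "semilattice_order m (\<^bold>\<le>) (\<^bold><)"
proof -
  have le_meet_iff: "c \<^bold>\<le> m a b \<longleftrightarrow> c \<^bold>\<le> a \<and> c \<^bold>\<le> b" for a b c
    using assms trans unfolding is_meet_wrt_def by blast
  have indirect_eq: "x = y" if "\<And>c. c \<^bold>\<le> x \<longleftrightarrow> c \<^bold>\<le> y" for x y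
    using that refl antisym by blast
  show ?thesis
  proof unfold_locales
    show "m (m a b) c = m a (m b c)" for a b c
      by (rule indirect_eq) (simp add: le_meet_iff)
    show "m a b = m b a" for a b
      by (rule indirect_eq) (auto simp: le_meet_iff)
    show "m a a = a" for a
      by (rule indirect_eq) (simp add: le_meet_iff)
    show order_iff: "a \<^bold>\<le> b \<longleftrightarrow> a = m a b" for a b
      using le_meet_iff refl antisym by metis
    show "a \<^bold>< b \<longleftrightarrow> a = m a b \<and> a \<noteq> b" for a b
      by (simp add: strict_iff_order flip: order_iff)
  qed
qed

lemma ado_semilattice_if_left_regular_band:
  assumes band: "left_regular_band j"
    and meet: "is_meet_wrt (band_le j) m"
    and join_meet_distrib: "\<And>a b c. j a (m b c) = m (j a b) (j a c)"
    and meet_le_join_meet: "\<And>a b c. band_le j (m a c) (j (m a b) c)"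
  shows "ado_semilattice m j"
proof -
  interpret band: ordering "band_le j" "\<lambda>a b. band_le j a b \<and> a \<noteq> b"
    using band by (rule left_regular_band_ordering)
  interpret meet: semilattice_order m "band_le j" "\<lambda>a b. band_le j a b \<and> a \<noteq> b"
    using meet by (rule band.semilattice_order_if_is_meet_wrt)
  have meet_le_eq: "meet_le m = band_le j"
    by (auto simp: fun_eq_iff meet_le_def meet.order_iff)
  have assoc: "j a (j b c) = j (j a b) c" and idem: "j a a = a" for a b c
    using band unfolding left_regular_band_def by blast+
  have join_upper: "band_le j a (j a b)" for a b
    by (simp add: band_le_def assoc idem)
  have join_least: "band_le j (j a b) c" if "band_le j a c" and "band_le j b c" for a b c
    using that assoc by (metis band_le_def)
  have join_meet_absorb: "j a (m b (j a b)) = j a b" for a b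
    using join_meet_distrib[of a b "j a b"] join_upper[of a b]
    by (simp add: band_le_def)
  show ?thesis
    unfolding ado_semilattice_def o_semilattice_def o_distributive_def meet_le_eq
      is_semilattice_iff_semilattice
  proof (intro conjI allI)
    show "band_le j (j (m x y) (m y z)) y" for x y z
      by (intro join_least meet.cobounded1 meet.cobounded2)
    show "band_le j (j x y) (j x (m y (j x y)))" for x y
      by (simp add: join_meet_absorb band.refl)
  qed (simp_all add: meet.semilattice_axioms join_upper meet_le_join_meet
      join_meet_distrib assoc)
qed

locale ado_algebra =
  fixes m j :: "'a \<Rightarrow> 'a \<Rightarrow> 'a"
  assumes ado: "ado_semilattice m j"
begin

sublocale meet: semilattice_order m "meet_le m" "\<lambda>x y. meet_le m x y \<and> x \<noteq> y"
  using ado by (simp add: ado_semilattice_def o_semilattice_def semilattice_order_meet_le)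

lemma
  shows join_assoc: "j x (j y z) = j (j x y) z"
    and join_upper: "meet_le m x (j x y)"
    and join_meet_le_middle: "meet_le m (j (m x y) (m y z)) y"
    and join_le_join_meet_join: "meet_le m (j x y) (j x (m y (j x y)))"
    and meet_le_join_meet: "meet_le m (m x z) (j (m x y) z)"
    and join_meet_distrib_below:
      "j (m a d) (m (m b d) (m c d)) = m (j (m a d) (m b d)) (j (m a d) (m c d))"
  using ado unfolding ado_semilattice_def o_semilattice_def o_distributive_def by blast+

lemma join_idem: "j x x = x"
  using join_meet_le_middle[of x x x] join_upper[of x x] by (simp add: meet.antisym)

lemma join_least: "meet_le m (j a b) c" if "meet_le m a c" and "meet_le m b c"
  using join_meet_le_middle[of a c b] that by (simp add: meet.absorb1 meet.absorb2)

lemma band_le_iff_meet_le: "band_le j x y \<longleftrightarrow> meet_le m x y"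
proof
  show "meet_le m x y" if "band_le j x y"
    using that join_upper[of x y] by (simp add: band_le_def)
  show "band_le j x y" if "meet_le m x y"
  proof -
    have "meet_le m y (j x y)"
      using meet_le_join_meet[of y y x] that by (simp add: meet.absorb2)
    then show ?thesis
      using join_least[OF that meet.refl] by (simp add: band_le_def meet.antisym)
  qed
qed

lemma join_left_regular: "j (j a b) a = j a b"
  using join_least[OF meet.refl join_upper] join_upper by (rule meet.antisym)

lemma join_mono_right: "meet_le m (j x y) (j x z)" if "meet_le m y z"
proof -
  have "j y z = z"
    using that by (simp add: band_le_iff_meet_le[symmetric] band_le_def)
  then have "j (j x y) (j x z) = j x z"
    by (metis join_assoc join_left_regular)
  then show ?thesis
    by (simp add: band_le_iff_meet_le[symmetric] band_le_def)
qed

lemma join_meet_absorb: "j a (m b (j a b)) = j a b"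
  using join_mono_right[OF meet.cobounded1] join_le_join_meet_join by (rule meet.antisym)

lemma join_meet_interval: "j a (m b z) = z" if "meet_le m a z" and "meet_le m z (j a b)"
proof -
  let ?d = "j a b"
  have z_below: "m z ?d = z" "m ?d z = z"
    using that(2) by (simp_all add: meet.absorb1 meet.absorb2)
  have "j a (m b z) = j (m a ?d) (m (m b ?d) (m z ?d))"
    using join_upper by (simp add: meet.absorb1 meet.assoc z_below)
  also have "\<dots> = m (j (m a ?d) (m b ?d)) (j (m a ?d) (m z ?d))"
    by (rule join_meet_distrib_below)
  also have "\<dots> = m ?d (j a z)"
    using that join_upper by (simp add: meet.absorb1 join_meet_absorb)
  also have "\<dots> = z"
    using that by (simp add: band_le_iff_meet_le[symmetric] band_le_def meet.absorb2)
  finally show ?thesis .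
qed

lemma join_meet_distrib: "j a (m b c) = m (j a b) (j a c)"
proof (rule meet.antisym)
  show "meet_le m (j a (m b c)) (m (j a b) (j a c))"
    by (simp add: join_mono_right)
  define e where "e = m (j a b) (j a c)"
  have a_le_e: "meet_le m a e"
    by (simp add: e_def join_upper)
  have "e = m (j a (m b e)) (j a (m c e))"
    using a_le_e by (simp add: join_meet_interval e_def)
  also have "\<dots> = j a (m (m b e) (m c e))"
    using join_meet_distrib_below[of a e b c] a_le_e by (simp add: meet.absorb1)
  finally have "e = j a (m (m b e) (m c e))" .
  moreover have "meet_le m (m (m b e) (m c e)) (m b c)"
    by (rule meet.mono) simp_all
  ultimately show "meet_le m e (j a (m b c))"
    by (metis join_mono_right)
qed

lemma left_regular_band: "left_regular_band j"
  by (simp add: left_regular_band_def join_assoc join_idem join_left_regular)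

lemma is_meet_wrt_band_le: "is_meet_wrt (band_le j) m"
  by (simp add: is_meet_wrt_def band_le_iff_meet_le)

end

theorem corollary3p3:
  fixes j m :: "'a \<Rightarrow> 'a \<Rightarrow> 'a"
  shows "ado_semilattice m j \<longleftrightarrow>
    left_regular_band j \<and>
    is_meet_wrt (band_le j) m \<and>
    (\<forall>a b c. j a (m b c) = m (j a b) (j a c)) \<and>
    (\<forall>a b c. band_le j (m a c) (j (m a b) c))"
proof
  assume "ado_semilattice m j"
  then interpret ado_algebra m j
    by unfold_locales
  show "left_regular_band j \<and> is_meet_wrt (band_le j) m \<and>
      (\<forall>a b c. j a (m b c) = m (j a b) (j a c)) \<and>
      (\<forall>a b c. band_le j (m a c) (j (m a b) c))"
    by (simp add: left_regular_band is_meet_wrt_band_le join_meet_distrib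
        band_le_iff_meet_le meet_le_join_meet)
qed (blast intro: ado_semilattice_if_left_regular_band)

end
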